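(* Let $d\le n'\le n$ be integers. There exist hypergraphs $H=(V,E)$ with $|V|=n$, all edges of size $d$, and $|E|=\binom{n'}{d}$, such that every non-adaptive generalized group testing solution for $H$ has size $\Omega\!\left(\min\{n',\, d\log|E|/\log d\}\right)=\Omega\!\left(\min\{n',\, d^2\log n'/\log d\}\right)$.
   Context: A set $T\subseteq V$ (a "test") separates two sets $A,B\subseteq V$ if exactly one of $A\cap T$, $B\cap T$ is empty. A non-adaptive generalized group testing solution for a hypergraph $H=(V,E)$ is a family $\mathcal{T}$ of subsets of $V$ such that for every two distinct $A,B\in E$ some $T\in\mathcal{T}$ separates $A$ and $B$. The $\Omega(\cdot)$ hides an absolute constant. *)

theory Defs
  imports Complex_Main
begin

definition separates :: "'a set \<Rightarrow> 'a set \<Rightarrow> 'a set \<Rightarrow> bool" where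
  "separates T A B \<longleftrightarrow> ((A \<inter> T = {}) \<noteq> (B \<inter> T = {}))"

definition ngt_solution :: "'a set \<Rightarrow> 'a set set \<Rightarrow> 'a set set \<Rightarrow> bool" where
  "ngt_solution V E \<T> \<longleftrightarrow> (\<forall>T\<in>\<T>. T \<subseteq> V) \<and>
     (\<forall>A\<in>E. \<forall>B\<in>E. A \<noteq> B \<longrightarrow> (\<exists>T\<in>\<T>. separates T A B))"

end

theory Submission
  imports Defs
begin

(* Take E to be all d-subsets of an n'-set U, and let r = (d - 1) div 2 and C = r (r + 1) / 2.
   Call a point z of U covered if every test containing z also contains one of some r other
   points. Two distinct covered points x, y cannot exist: a (d - 1)-set S avoiding x and y and
   containing the witnesses of both gives edges S + x and S + y that no test separates. Hence the
   tests containing the remaining points form an r-cover-free family of subsets of the t tests.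
   The classical bound for such families (peel off a member with more than s k elements; once all
   members are smaller, each has a private subset of at most k elements) gives
   n' / 2 <= (e t / k)^k <= (e C)^k for the least k with t <= k C. If k = 1 this says t = Omega(n');
   otherwise k C <= 2 t, so t = Omega(C log n' / log C) = Omega(d^2 log n' / log d). Since
   log |E| <= d log n', this is the claim; for d = 2 the counting bound |E| <= 2^t suffices. *)

definition cover_free :: "nat \<Rightarrow> 'i set \<Rightarrow> ('i \<Rightarrow> 'x set) \<Rightarrow> bool" where
  "cover_free s I F \<longleftrightarrow> (\<forall>i\<in>I. \<forall>J \<subseteq> I - {i}. card J \<le> s \<longrightarrow> \<not> F i \<subseteq> \<Union>(F ` J))"

definition tests_containing :: "'a set set \<Rightarrow> 'a \<Rightarrow> 'a set set" where
  "tests_containing T z = {S \<in> T. z \<in> S}"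

lemma exists_cover_by_small_subsets:
  assumes "finite A" "card A \<le> s * k"
  shows "\<exists>Q. finite Q \<and> card Q \<le> s \<and> \<Union>Q = A \<and> (\<forall>q\<in>Q. card q \<le> k)"
  using assms
proof (induction s arbitrary: A)
  case 0
  then show ?case by (intro exI[of _ "{}"]) auto
next
  case (Suc s)
  obtain B where B: "B \<subseteq> A" "card B = min k (card A)"
    using obtain_subset_with_card_n[of "min k (card A)" A] by auto
  have "card (A - B) \<le> s * k"
    using Suc.prems B by (simp add: card_Diff_subset finite_subset)
  then obtain Q where Q: "finite Q" "card Q \<le> s" "\<Union>Q = A - B" "\<forall>q\<in>Q. card q \<le> k"
    using Suc.IH[of "A - B"] Suc.prems by auto
  have "card (insert B Q) \<le> Suc s"
    using Q(2) by (intro card_insert_le_m1) auto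
  then show ?case
    using Q B by (intro exI[of _ "insert B Q"]) auto
qed

lemma cover_free_private_subset:
  assumes cf: "cover_free s I F" and i: "i \<in> I"
    and fin: "finite (F i)" and small: "card (F i) \<le> s * k"
  shows "\<exists>P \<subseteq> F i. card P \<le> k \<and> (\<forall>j\<in>I - {i}. \<not> P \<subseteq> F j)"
proof (rule ccontr)
  assume "\<not> ?thesis"
  then have covered: "\<forall>q. q \<subseteq> F i \<longrightarrow> card q \<le> k \<longrightarrow> (\<exists>j\<in>I - {i}. q \<subseteq> F j)"
    by blast
  obtain Q where Q: "finite Q" "card Q \<le> s" "\<Union>Q = F i" "\<forall>q\<in>Q. card q \<le> k"
    using exists_cover_by_small_subsets[OF fin small] by blast
  have "\<forall>q\<in>Q. \<exists>j\<in>I - {i}. q \<subseteq> F j"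
  proof
    fix q assume "q \<in> Q"
    then have "q \<subseteq> F i" "card q \<le> k"
      using Q(3,4) by auto
    then show "\<exists>j\<in>I - {i}. q \<subseteq> F j"
      using covered by blast
  qed
  then obtain g where g: "\<forall>q\<in>Q. g q \<in> I - {i} \<and> q \<subseteq> F (g q)"
    by metis
  have "card (g ` Q) \<le> s"
    using card_image_le[OF Q(1), of g] Q(2) by linarith
  moreover have "g ` Q \<subseteq> I - {i}"
    using g by auto
  moreover have "F i \<subseteq> \<Union>(F ` g ` Q)"
  proof
    fix x assume "x \<in> F i"
    then obtain q where "q \<in> Q" "x \<in> q"
      using Q(3) by blast
    then show "x \<in> \<Union>(F ` g ` Q)"
      using g by blast
  qed
  ultimately show False
    using cf[unfolded cover_free_def, rule_format, OF i, of "g ` Q"] by blast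
qed

lemma cover_free_card_le_of_small:
  assumes "finite X" "\<forall>i\<in>I. F i \<subseteq> X" "cover_free s I F" "\<forall>i\<in>I. card (F i) \<le> s * k"
  shows "card I \<le> card {P. P \<subseteq> X \<and> card P \<le> k}"
proof -
  have "\<forall>i\<in>I. \<exists>P \<subseteq> F i. card P \<le> k \<and> (\<forall>j\<in>I - {i}. \<not> P \<subseteq> F j)"
    using cover_free_private_subset[OF assms(3)] assms(1,2,4) by (meson finite_subset)
  then obtain P where P: "\<forall>i\<in>I. P i \<subseteq> F i \<and> card (P i) \<le> k \<and> (\<forall>j\<in>I - {i}. \<not> P i \<subseteq> F j)"
    by metis
  have "inj_on P I"
    by (rule inj_onI) (use P in blast)
  moreover have "P ` I \<subseteq> {P. P \<subseteq> X \<and> card P \<le> k}"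
    using P assms(2) by blast
  ultimately show ?thesis
    using card_inj_on_le assms(1) by force
qed

lemma cover_free_remove:
  assumes "cover_free (Suc s) I F" "i \<in> I"
  shows "cover_free s (I - {i}) (\<lambda>j. F j - F i)"
  unfolding cover_free_def
proof (intro ballI allI impI notI)
  fix j J
  assume j: "j \<in> I - {i}" and J: "J \<subseteq> I - {i} - {j}" "card J \<le> s"
    and cov: "F j - F i \<subseteq> \<Union>((\<lambda>j. F j - F i) ` J)"
  have "F j \<subseteq> \<Union>(F ` insert i J)"
    using cov by blast
  moreover have "insert i J \<subseteq> I - {j}"
    using J j assms(2) by auto
  moreover have "card (insert i J) \<le> Suc s"
    using J(2) by (intro card_insert_le_m1) auto
  ultimately show False
    using assms(1) j unfolding cover_free_def by blast
qed

lemma cover_free_card_le: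
  assumes "finite X" "finite I" "\<forall>i\<in>I. F i \<subseteq> X" "1 \<le> s" "cover_free s I F"
    and "card X \<le> k * (\<Sum>j\<le>s. j)"
  shows "card I \<le> (s - 1) + card {P. P \<subseteq> X \<and> card P \<le> k}"
  using assms
proof (induction s arbitrary: X I F)
  case 0
  then show ?case by simp
next
  case (Suc s)
  show ?case
  proof (cases "\<exists>i\<in>I. Suc s * k < card (F i)")
    case False
    then have "card I \<le> card {P. P \<subseteq> X \<and> card P \<le> k}"
      using cover_free_card_le_of_small[OF Suc.prems(1,3,5), of k] by (simp add: not_less)
    then show ?thesis
      by linarith
  next
    case True
    then obtain i where i: "i \<in> I" "Suc s * k < card (F i)"
      by blast
    have Fi: "F i \<subseteq> X"
      using Suc.prems(3) i(1) by blast
    then have cX: "card (X - F i) + card (F i) = card X"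
      using Suc.prems(1) by (simp add: card_Diff_subset card_mono finite_subset)
    have s: "1 \<le> s"
    proof (rule ccontr)
      assume "\<not> 1 \<le> s"
      then have "s = 0"
        by simp
      then show False
        using Suc.prems(6) cX i(2) by simp
    qed
    have "card (X - F i) \<le> k * (\<Sum>j\<le>s. j)"
      using Suc.prems(6) cX i(2) by (simp add: algebra_simps)
    then have "card (I - {i}) \<le> (s - 1) + card {P. P \<subseteq> X - F i \<and> card P \<le> k}"
      using Suc.IH[of "X - F i" "I - {i}" "\<lambda>j. F j - F i"] Suc.prems s
        cover_free_remove[OF Suc.prems(5) i(1)] by auto
    moreover have "card {P. P \<subseteq> X - F i \<and> card P \<le> k} \<le> card {P. P \<subseteq> X \<and> card P \<le> k}"
      using Suc.prems(1) by (intro card_mono) auto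
    moreover have "card I = Suc (card (I - {i}))"
      by (rule card_Suc_Diff1[OF Suc.prems(2) i(1), symmetric])
    ultimately show ?thesis
      using s by simp
  qed
qed

lemma card_subsets_card_le_sum_choose:
  assumes "finite X"
  shows "card {P. P \<subseteq> X \<and> card P \<le> k} \<le> (\<Sum>i\<le>k. card X choose i)"
proof -
  have "{P. P \<subseteq> X \<and> card P \<le> k} = (\<Union>i\<le>k. {P. P \<subseteq> X \<and> card P = i})"
    by auto
  then have "card {P. P \<subseteq> X \<and> card P \<le> k} \<le> (\<Sum>i\<le>k. card {P. P \<subseteq> X \<and> card P = i})"
    using card_UN_le[of "{..k}" "\<lambda>i. {P. P \<subseteq> X \<and> card P = i}"] by simp
  also have "\<dots> = (\<Sum>i\<le>k. card X choose i)"
    using n_subsets[OF assms] by simp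
  finally show ?thesis .
qed

lemma sum_power_div_fact_le_exp:
  fixes x :: real
  assumes "0 \<le> x"
  shows "(\<Sum>i\<le>k. x ^ i / fact i) \<le> exp x"
proof -
  have "summable (\<lambda>n. x ^ n / fact n)" and exp_eq: "exp x = (\<Sum>n. x ^ n / fact n)"
    using exp_converges[of x] by (auto simp: sums_iff divide_inverse_commute scaleR_conv_of_real)
  then show ?thesis
    using assms by (auto intro: sum_le_suminf)
qed

lemma sum_choose_le_exp_pow:
  assumes "1 \<le> k" "k \<le> t"
  shows "real (\<Sum>i\<le>k. t choose i) \<le> (real t / real k) ^ k * exp (real k)"
proof -
  have q: "1 \<le> real t / real k"
    using assms by simp
  have "real (\<Sum>i\<le>k. t choose i) \<le> (\<Sum>i\<le>k. (real t / real k) ^ k * (real k ^ i / fact i))"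
    unfolding of_nat_sum
  proof (rule sum_mono)
    fix i assume i: "i \<in> {..k}"
    have "real (t choose i) * fact i \<le> real t ^ i"
      using binomial_fact_pow[of t i] by (metis of_nat_fact of_nat_le_iff of_nat_mult of_nat_power)
    then have "real (t choose i) \<le> real t ^ i / fact i"
      by (simp add: field_simps)
    also have "real t ^ i = (real t / real k) ^ i * real k ^ i"
      using assms by (simp add: power_divide)
    also have "(real t / real k) ^ i \<le> (real t / real k) ^ k"
      using q i by (intro power_increasing) auto
    finally show "real (t choose i) \<le> (real t / real k) ^ k * (real k ^ i / fact i)"
      by (simp add: divide_right_mono mult_right_mono)
  qed
  also have "\<dots> = (real t / real k) ^ k * (\<Sum>i\<le>k. real k ^ i / fact i)"
    by (simp add: sum_distrib_left)
  also have "\<dots> \<le> (real t / real k) ^ k * exp (real k)"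
    using q by (intro mult_left_mono sum_power_div_fact_le_exp) auto
  finally show ?thesis .
qed

lemma ln_sum_choose_le:
  assumes "1 \<le> k" "k \<le> t" "t \<le> k * C"
  shows "ln (real (\<Sum>i\<le>k. t choose i)) \<le> real k * (1 + ln (real C))"
proof -
  have pos: "0 < real (\<Sum>i\<le>k. t choose i)"
    using assms(2) by (simp add: sum_pos2[of _ 0])
  have t_div_k: "real t / real k \<le> real C"
    using assms by (simp add: divide_le_eq mult.commute flip: of_nat_mult)
  have "ln (real (\<Sum>i\<le>k. t choose i)) \<le> ln ((real t / real k) ^ k * exp (real k))"
    using pos sum_choose_le_exp_pow[OF assms(1,2)] by (intro ln_mono) auto
  also have "\<dots> = real k * ln (real t / real k) + real k"
    using assms by (simp add: ln_mult ln_realpow)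
  also have "\<dots> \<le> real k * ln (real C) + real k"
    using assms t_div_k by (intro add_right_mono mult_left_mono ln_mono) auto
  finally show ?thesis
    by (simp add: algebra_simps)
qed

lemma sq_mul_ln_le_of_ln_half_le:
  fixes C d k n t :: nat
  assumes d: "3 \<le> d" and n: "4 \<le> n" and C: "1 \<le> C" "C \<le> d ^ 2" "d ^ 2 \<le> 32 * C"
    and ln_half: "ln (real n / 2) \<le> real k * (1 + ln (real C))" and kC: "k * C \<le> 2 * t"
  shows "real d ^ 2 * ln (real n) \<le> 384 * ln (real d) * real t"
proof -
  have ln_d: "1 \<le> ln (real d)"
    using exp_le d by (subst ln_ge_iff) auto
  have "ln (real C) \<le> ln (real d ^ 2)"
    using C by (intro ln_mono) (auto simp flip: of_nat_power)
  then have ln_C: "ln (real C) \<le> 2 * ln (real d)"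
    by (simp add: ln_realpow)
  have "real n \<le> (real n / 2) ^ 2"
    using n by (simp add: power2_eq_square field_simps mult_right_mono)
  then have "ln (real n) \<le> ln ((real n / 2) ^ 2)"
    using n by (intro ln_mono) auto
  then have ln_n: "ln (real n) \<le> 2 * ln (real n / 2)"
    using n by (simp add: ln_realpow)
  have "real C * ln (real n / 2) \<le> real C * (real k * (1 + ln (real C)))"
    using ln_half by (intro mult_left_mono) auto
  also have "\<dots> = real (k * C) * (1 + ln (real C))"
    by (simp add: algebra_simps)
  also have "\<dots> \<le> real (2 * t) * (3 * ln (real d))"
    using kC ln_C ln_d C(1) by (intro mult_mono) (auto simp del: of_nat_mult)
  finally have C_ln_half: "real C * ln (real n / 2) \<le> 6 * real t * ln (real d)"
    by simp
  have "real d ^ 2 * ln (real n) \<le> (32 * real C) * (2 * ln (real n / 2))"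
    using C(3) ln_n n by (intro mult_mono) (auto simp flip: of_nat_power)
  also have "\<dots> \<le> 384 * ln (real d) * real t"
    using C_ln_half by simp
  finally show ?thesis .
qed

lemma ngt_solutionD:
  assumes "ngt_solution V E T" "A \<in> E" "B \<in> E" "A \<noteq> B"
  shows "\<exists>S\<in>T. separates S A B"
  using assms unfolding ngt_solution_def by simp

lemma ngt_solution_card_le_two_pow:
  assumes "ngt_solution V E T" "finite T"
  shows "card E \<le> 2 ^ card T"
proof -
  have "inj_on (\<lambda>A. {S\<in>T. A \<inter> S \<noteq> {}}) E"
  proof (rule inj_onI, rule ccontr)
    fix A B
    assume AB: "A \<in> E" "B \<in> E" "A \<noteq> B"
      and same: "{S\<in>T. A \<inter> S \<noteq> {}} = {S\<in>T. B \<inter> S \<noteq> {}}"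
    obtain S where "S \<in> T" "separates S A B"
      using ngt_solutionD[OF assms(1) AB] by blast
    then show False
      using same unfolding separates_def by blast
  qed
  then have "card E \<le> card (Pow T)"
    using assms(2) by (intro card_inj_on_le) auto
  then show ?thesis
    using assms(2) by (simp add: card_Pow)
qed

lemma covered_vertex_unique:
  assumes sol: "ngt_solution V {A. A \<subseteq> U \<and> card A = d} T"
    and U: "finite U" "2 * r < d" "d < card U"
    and x: "x \<in> U" "Rx \<subseteq> U - {x}" "card Rx \<le> r"
      "tests_containing T x \<subseteq> \<Union>(tests_containing T ` Rx)"
    and y: "y \<in> U" "Ry \<subseteq> U - {y}" "card Ry \<le> r"
      "tests_containing T y \<subseteq> \<Union>(tests_containing T ` Ry)"
  shows "x = y"
proof (rule ccontr)
  assume xy: "x \<noteq> y"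
  have "finite Rx" "finite Ry"
    using x(2) y(2) U(1) by (meson finite_Diff finite_subset)+
  then have "card (Rx \<union> Ry - {x, y}) \<le> card (Rx \<union> Ry)"
    by (intro card_mono) auto
  also have "\<dots> \<le> card Rx + card Ry"
    by (rule card_Un_le)
  finally have "card (Rx \<union> Ry - {x, y}) \<le> d - 1"
    using x(3) y(3) U(2) by linarith
  moreover have "d - 1 \<le> card (U - {x, y})"
    using x(1) y(1) xy U by (simp add: card_Diff_subset)
  moreover have "Rx \<union> Ry - {x, y} \<subseteq> U - {x, y}"
    using x(2) y(2) by blast
  ultimately obtain S where S: "Rx \<union> Ry - {x, y} \<subseteq> S" "S \<subseteq> U - {x, y}" "card S = d - 1"
    using exists_subset_between U(1) by (metis finite_Diff)
  have "finite S"
    using S(2) U(1) finite_subset by blast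
  moreover have "x \<notin> S" "y \<notin> S"
    using S(2) by auto
  ultimately have edges: "insert x S \<in> {A. A \<subseteq> U \<and> card A = d}"
      "insert y S \<in> {A. A \<subseteq> U \<and> card A = d}" "insert x S \<noteq> insert y S"
    using S x(1) y(1) xy U(2) by auto
  obtain Q where Q: "Q \<in> T" "separates Q (insert x S) (insert y S)"
    using ngt_solutionD[OF sol edges] by blast
  then have SQ: "S \<inter> Q = {}" and "(x \<in> Q \<and> y \<notin> Q) \<or> (y \<in> Q \<and> x \<notin> Q)"
    unfolding separates_def by auto
  have witness: "\<exists>z\<in>R. z \<in> Q"
    if "w \<in> Q" "tests_containing T w \<subseteq> \<Union>(tests_containing T ` R)" for w R
    using that Q(1) unfolding tests_containing_def by blast
  from this[of x Rx] this[of y Ry] show False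
    using \<open>(x \<in> Q \<and> y \<notin> Q) \<or> (y \<in> Q \<and> x \<notin> Q)\<close> x(2,4) y(2,4) S(1) SQ by blast
qed

lemma ngt_solution_card_le_small_test_sets:
  assumes sol: "ngt_solution V {A. A \<subseteq> U \<and> card A = d} T"
    and "finite U" "finite T" "1 \<le> r" "2 * r < d" "d < card U"
    and "card T \<le> k * (\<Sum>j\<le>r. j)"
  shows "card U \<le> r + card {P. P \<subseteq> T \<and> card P \<le> k}"
proof -
  define covered where "covered z \<longleftrightarrow>
    (\<exists>R \<subseteq> U - {z}. card R \<le> r \<and> tests_containing T z \<subseteq> \<Union>(tests_containing T ` R))" for z
  define G where "G = {z \<in> U. \<not> covered z}"
  have "card {z \<in> U. covered z} \<le> 1"
    using covered_vertex_unique[OF sol assms(2,5,6)] assms(2)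
    unfolding covered_def by (auto simp: card_le_Suc0_iff_eq)
  moreover have "card U = card G + card {z \<in> U. covered z}"
    unfolding G_def using assms(2) by (subst card_Un_disjoint[symmetric]) (auto intro: arg_cong[where f=card])
  moreover have "cover_free r G (tests_containing T)"
    unfolding cover_free_def G_def covered_def by blast
  then have "card G \<le> (r - 1) + card {P. P \<subseteq> T \<and> card P \<le> k}"
    using assms(2-4,7) by (intro cover_free_card_le) (auto simp: G_def tests_containing_def)
  ultimately show ?thesis
    using assms(4) by linarith
qed

lemma ngt_solution_lower_bound_large_d:
  assumes sol: "ngt_solution V {A. A \<subseteq> U \<and> card A = d} T"
    and "finite U" "finite T" "3 \<le> d" "d < card U"
  shows "real (card U) \<le> 3 * real (card T) \<or>
    real d ^ 2 * ln (real (card U)) \<le> 384 * ln (real d) * real (card T)"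
proof -
  define r where "r = (d - 1) div 2"
  define C where "C = (\<Sum>j\<le>r. j)"
  define t where "t = card T"
  define k where "k = (LEAST k. t \<le> k * C)"
  have r: "1 \<le> r" "2 * r < d" "d \<le> 4 * r"
    using assms(4) unfolding r_def by presburger+
  have C: "2 * C = r * (r + 1)"
    unfolding C_def using double_gauss_sum[of r, where 'a = nat] by (simp add: atLeast0AtMost)
  have C1: "1 \<le> C"
    using C r(1) by (cases r) auto
  have tk: "t \<le> k * C"
    unfolding k_def by (rule LeastI[of _ t]) (use C1 in simp)
  have kt: "k \<le> t"
    unfolding k_def by (rule Least_le) (use C1 in simp)
  have "card U \<le> r + card {P. P \<subseteq> T \<and> card P \<le> k}"
    using ngt_solution_card_le_small_test_sets[OF sol assms(2,3) r(1,2) assms(5)] tk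
    unfolding t_def C_def by blast
  also have "\<dots> \<le> r + (\<Sum>i\<le>k. t choose i)"
    using card_subsets_card_le_sum_choose[OF assms(3)] unfolding t_def by simp
  finally have N: "card U \<le> r + (\<Sum>i\<le>k. t choose i)" .
  have k1: "1 \<le> k"
  proof (rule ccontr)
    assume "\<not> 1 \<le> k"
    then have "k = 0"
      by simp
    then show False
      using N r assms(5) by simp
  qed
  show ?thesis
  proof (cases "k = 1")
    case True
    then have "card U \<le> 3 * t"
      using N r assms(5) kt by simp
    then show ?thesis
      unfolding t_def by linarith
  next
    case False
    have "k \<le> 2 * (k - 1)"
      using False k1 by linarith
    then have "k * C \<le> 2 * ((k - 1) * C)"
      using mult_le_mono1 by (metis mult.assoc)
    moreover have "(k - 1) * C < t"
      unfolding k_def by (rule not_le_imp_less, rule not_less_Least) (use k1 in \<open>simp add: k_def\<close>)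
    ultimately have kC: "k * C \<le> 2 * t"
      by linarith
    have "real (card U) / 2 \<le> real (\<Sum>i\<le>k. t choose i)"
      using N r assms(5) by linarith
    moreover have "0 < real (card U) / 2"
      using assms(4,5) by simp
    ultimately have "ln (real (card U) / 2) \<le> ln (real (\<Sum>i\<le>k. t choose i))"
      by (intro ln_mono) auto
    also have "\<dots> \<le> real k * (1 + ln (real C))"
      by (rule ln_sum_choose_le[OF k1 kt tk])
    finally have ln_half: "ln (real (card U) / 2) \<le> real k * (1 + ln (real C))" .
    have "r * (r + 1) \<le> d * d" "d * d \<le> 16 * (r * r)"
      using mult_le_mono[of r d "r + 1" d] mult_le_mono[OF r(3) r(3)] r(2) by simp_all
    then have "C \<le> d ^ 2" "d ^ 2 \<le> 32 * C"
      using C unfolding power2_eq_square by (simp_all add: algebra_simps)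
    then show ?thesis
      using sq_mul_ln_le_of_ln_half_le[OF assms(4) _ C1 _ _ ln_half kC] assms(4,5)
      unfolding t_def by simp
  qed
qed

lemma ngt_solution_card_lower_bound:
  assumes sol: "ngt_solution V {A. A \<subseteq> U \<and> card A = d} T"
    and "finite V" "finite U" "d \<le> card U"
  shows "min (real (card U)) (real d * ln (real (card U choose d)) / ln (real d))
    \<le> 384 * real (card T)"
proof -
  have finT: "finite T"
    using sol assms(2) unfolding ngt_solution_def by (meson PowI finite_Pow_iff finite_subset subsetI)
  define X where "X = real d * ln (real (card U choose d)) / ln (real d)"
  have E_pos: "0 < real (card U choose d)"
    using assms(4) by simp
  have "card U choose d \<le> 2 ^ card T"
    using ngt_solution_card_le_two_pow[OF sol finT] n_subsets[OF assms(3)] by simp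
  then have "ln (real (card U choose d)) \<le> ln (2 ^ card T)"
    using E_pos by (intro ln_mono) (auto simp flip: of_nat_power)
  then have ln_E_le: "ln (real (card U choose d)) \<le> real (card T) * ln 2"
    by (simp add: ln_realpow)
  consider "d \<le> 1" | "d = card U" | "d = 2" | "3 \<le> d" "d < card U"
    using assms(4) by linarith
  then have "X \<le> 384 * real (card T) \<or> real (card U) \<le> 384 * real (card T)"
  proof cases
    case 1
    then show ?thesis
      unfolding X_def by (cases d) auto
  next
    case 2
    then show ?thesis
      unfolding X_def by simp
  next
    case 3
    then have "X \<le> 2 * real (card T)"
      using ln_E_le unfolding X_def by (simp add: divide_le_eq)
    then show ?thesis
      by linarith
  next
    case 4
    have "ln (real (card U choose d)) \<le> ln (real (card U) ^ d)"
      using E_pos binomial_le_pow[OF assms(4)] by (intro ln_mono) (auto simp flip: of_nat_power)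
    then have "real d * ln (real (card U choose d)) \<le> real d * (real d * ln (real (card U)))"
      by (intro mult_left_mono) (auto simp: ln_realpow)
    then have "real d * ln (real (card U choose d)) \<le> real d ^ 2 * ln (real (card U))"
      by (simp add: power2_eq_square)
    then have "real (card U) \<le> 3 * real (card T) \<or>
        real d * ln (real (card U choose d)) \<le> 384 * ln (real d) * real (card T)"
      using ngt_solution_lower_bound_large_d[OF sol assms(3) finT 4] by linarith
    moreover have "0 < ln (real d)"
      using 4 by simp
    ultimately have "X \<le> 384 * real (card T) \<or> real (card U) \<le> 3 * real (card T)"
      unfolding X_def by (auto simp: divide_le_eq mult_ac)
    then show ?thesis
      by linarith
  qed
  then show ?thesis
    unfolding X_def by linarith
qed

theorem claim5:
  shows "\<exists>c::real. c > 0 \<and>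
    (\<forall>d n' n :: nat. d \<le> n' \<and> n' \<le> n \<longrightarrow>
      (\<exists>(V::nat set) (E::nat set set).
         finite V \<and> card V = n \<and> E \<subseteq> Pow V \<and> (\<forall>e\<in>E. card e = d) \<and>
         card E = n' choose d \<and>
         (\<forall>\<T>. ngt_solution V E \<T> \<longrightarrow>
            c * min (real n') (real d * ln (real (card E)) / ln (real d)) \<le> real (card \<T>))))"
proof (intro exI[of _ "1/384"] conjI allI impI)
  fix d n' n :: nat
  assume dn: "d \<le> n' \<and> n' \<le> n"
  define E where "E = {A. A \<subseteq> {0..<n'} \<and> card A = d}"
  have card_E: "card E = n' choose d"
    unfolding E_def using n_subsets[of "{0..<n'}" d] by simp
  have "E \<subseteq> Pow {0..<n}"
    unfolding E_def using dn by auto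
  moreover have "(1/384) * min (real n') (real d * ln (real (card E)) / ln (real d)) \<le> real (card \<T>)"
    if "ngt_solution {0..<n} E \<T>" for \<T>
    using ngt_solution_card_lower_bound[OF that[unfolded E_def]] dn card_E by simp
  ultimately show "\<exists>(V::nat set) (E::nat set set).
      finite V \<and> card V = n \<and> E \<subseteq> Pow V \<and> (\<forall>e\<in>E. card e = d) \<and> card E = n' choose d \<and>
      (\<forall>\<T>. ngt_solution V E \<T> \<longrightarrow>
         (1/384) * min (real n') (real d * ln (real (card E)) / ln (real d)) \<le> real (card \<T>))"
    using card_E by (intro exI[of _ "{0..<n}"] exI[of _ E]) (auto simp: E_def)
qed simp

end
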